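(* Let $A\in\mathbb{Z}^{d\times n}$, $\mathbf{b}\in\mathbb{Z}^d$, $\mathbf{c}\in\mathbb{Z}^n$, $\mathbf{u}\in\mathbb{Z}_{\ge0}^n$. Let $\mathbf{x}_k$ be feasible and let $\alpha_1\mathbf{z}_1,\dots,\alpha_j\mathbf{z}_j$ ($j\ge2$) be successive steepest-descent augmentations, i.e. $\alpha_i\mathbf{z}_i$ is a steepest-descent augmentation relative to $\mathbf{x}_k+\sum_{l<i}\alpha_l\mathbf{z}_l$ for each $i$. If $\mathbf{z}_1$ and $\mathbf{z}_j$ do not have the same sign pattern, then $-\mathbf{c}^\top\mathbf{z}_1/\|\mathbf{z}_1\|_1\ >\ -\mathbf{c}^\top\mathbf{z}_j/\|\mathbf{z}_j\|_1$.
   Context: Feasible means $A\mathbf{x}=\mathbf{b}$, $\mathbf{0}\le\mathbf{x}\le\mathbf{u}$, $\mathbf{x}\in\mathbb{Z}^n$. A steepest-descent augmentation relative to a feasible $\mathbf{x}$ is $\alpha\mathbf{s}$ where $\mathbf{s}\in\mathbb{Z}^n\setminus\{\mathbf{0}\}$, $A\mathbf{s}=\mathbf{0}$, $\mathbf{c}^\top\mathbf{s}<0$, $\alpha$ is a positive integer with $\mathbf{x}+\alpha\mathbf{s}$ feasible, and $-\mathbf{c}^\top\mathbf{s}/\|\mathbf{s}\|_1\ge-\mathbf{c}^\top\mathbf{z}/\|\mathbf{z}\|_1$ for every $\mathbf{z}\in\mathbb{Z}^n\setminus\{\mathbf{0}\}$ with $A\mathbf{z}=\mathbf{0}$ and $\mathbf{x}+\mathbf{z}$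 feasible. Two vectors $\mathbf{v},\mathbf{w}\in\mathbb{R}^n$ have the same sign pattern if $v_iw_i\ge0$ for all $i$ (i.e. there is no coordinate in which one is positive and the other negative). *)

theory Defs
  imports "HOL-Analysis.Analysis"
begin

text \<open>Vectors in Z^n are functions nat => int supported on {..<n};
  a d x n integer matrix is a function nat => nat => int (row, column).\<close>

definition supp_in :: "nat \<Rightarrow> (nat \<Rightarrow> int) \<Rightarrow> bool" where
  "supp_in n v \<longleftrightarrow> (\<forall>i. i \<ge> n \<longrightarrow> v i = 0)"

definition matvec :: "nat \<Rightarrow> (nat \<Rightarrow> nat \<Rightarrow> int) \<Rightarrow> (nat \<Rightarrow> int) \<Rightarrow> nat \<Rightarrow> int" where
  "matvec n A v = (\<lambda>r. \<Sum>i<n. A r i * v i)"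

definition dotp :: "nat \<Rightarrow> (nat \<Rightarrow> int) \<Rightarrow> (nat \<Rightarrow> int) \<Rightarrow> int" where
  "dotp n c v = (\<Sum>i<n. c i * v i)"

definition norm1 :: "nat \<Rightarrow> (nat \<Rightarrow> int) \<Rightarrow> int" where
  "norm1 n v = (\<Sum>i<n. \<bar>v i\<bar>)"

definition feasible ::
  "nat \<Rightarrow> nat \<Rightarrow> (nat \<Rightarrow> nat \<Rightarrow> int) \<Rightarrow> (nat \<Rightarrow> int) \<Rightarrow> (nat \<Rightarrow> int) \<Rightarrow> (nat \<Rightarrow> int) \<Rightarrow> bool" where
  "feasible d n A b u x \<longleftrightarrow> supp_in n x \<and> (\<forall>r<d. matvec n A x r = b r)
      \<and> (\<forall>i<n. 0 \<le> x i \<and> x i \<le> u i)"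

definition in_kernel :: "nat \<Rightarrow> nat \<Rightarrow> (nat \<Rightarrow> nat \<Rightarrow> int) \<Rightarrow> (nat \<Rightarrow> int) \<Rightarrow> bool" where
  "in_kernel d n A s \<longleftrightarrow> supp_in n s \<and> (\<forall>r<d. matvec n A s r = 0)"

definition descent_ratio :: "nat \<Rightarrow> (nat \<Rightarrow> int) \<Rightarrow> (nat \<Rightarrow> int) \<Rightarrow> real" where
  "descent_ratio n c s = - real_of_int (dotp n c s) / real_of_int (norm1 n s)"

definition sd_augmentation ::
  "nat \<Rightarrow> nat \<Rightarrow> (nat \<Rightarrow> nat \<Rightarrow> int) \<Rightarrow> (nat \<Rightarrow> int) \<Rightarrow> (nat \<Rightarrow> int) \<Rightarrow> (nat \<Rightarrow> int)
    \<Rightarrow> (nat \<Rightarrow> int) \<Rightarrow> int \<Rightarrow> (nat \<Rightarrow> int) \<Rightarrow> bool" where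
  "sd_augmentation d n A b c u x \<alpha> s \<longleftrightarrow>
     in_kernel d n A s \<and> s \<noteq> (\<lambda>_. 0) \<and> dotp n c s < 0 \<and> \<alpha> > 0
     \<and> feasible d n A b u (\<lambda>i. x i + \<alpha> * s i)
     \<and> (\<forall>z. in_kernel d n A z \<and> z \<noteq> (\<lambda>_. 0) \<and> feasible d n A b u (\<lambda>i. x i + z i)
            \<longrightarrow> descent_ratio n c s \<ge> descent_ratio n c z)"

definition same_sign_pattern :: "nat \<Rightarrow> (nat \<Rightarrow> int) \<Rightarrow> (nat \<Rightarrow> int) \<Rightarrow> bool" where
  "same_sign_pattern n v w \<longleftrightarrow> (\<forall>i<n. v i * w i \<ge> 0)"

end

theory Submission imports Defs begin

(* Write X_i for the point before the i-th augmentation and R_i for the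
   descent ratio -c^T z_i / ||z_i||_1.  For i < m the integer vector
     v = alpha_i z_i + ... + alpha_(m-1) z_(m-1) + z_m
   lies in the kernel, improves the objective, and X_i + v = X_m + z_m is feasible
   (a full step alpha_m z_m is feasible, hence so is the unit step z_m, by convexity of
   the box).  Steepest descent at X_i therefore gives -c^T v <= R_i ||v||_1.
   Expanding -c^T v = sum alpha_l R_l ||z_l|| + R_m ||z_m|| and bounding ||v||_1 by the
   triangle inequality shows first that the ratios R_i are antitone, and then that a
   sign conflict between z_i and z_m makes the triangle inequality strict, forcing
   R_m < R_i. *)

subsection \<open>Linear combinations of integer vectors\<close>

text \<open>The vector \<open>\<lambda>t. (\<Sum>l\<in>L. a l * w l t) + y t\<close> is the shape of every combined
  step below; matrix action and objective are linear in it.\<close>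

lemma matvec_comb:
  "finite L \<Longrightarrow> matvec n A (\<lambda>t. (\<Sum>l\<in>L. a l * w l t) + y t) r
     = (\<Sum>l\<in>L. a l * matvec n A (w l) r) + matvec n A y r"
  unfolding matvec_def
  by (simp add: distrib_left sum.distrib sum_distrib_left sum.swap[of _ L] mult.left_commute)

lemma dotp_comb:
  "finite L \<Longrightarrow> dotp n c (\<lambda>t. (\<Sum>l\<in>L. a l * w l t) + y t)
     = (\<Sum>l\<in>L. a l * dotp n c (w l)) + dotp n c y"
  unfolding dotp_def
  by (simp add: distrib_left sum.distrib sum_distrib_left sum.swap[of _ L] mult.left_commute)

lemma in_kernel_comb:
  assumes "finite L" "\<forall>l\<in>L. in_kernel d n A (w l)" "in_kernel d n A y"
  shows "in_kernel d n A (\<lambda>t. (\<Sum>l\<in>L. a l * w l t) + y t)"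
  using assms unfolding in_kernel_def supp_in_def by (simp add: matvec_comb)

text \<open>Box convexity: if a kernel step of length \<open>a \<ge> 1\<close> along \<open>s\<close> stays feasible,
  so does the unit step along \<open>s\<close>.\<close>

lemma feasible_unit_step:
  assumes x: "feasible d n A b u x" and xs: "feasible d n A b u (\<lambda>i. x i + a * s i)"
    and a: "a \<ge> 1" and s: "in_kernel d n A s"
  shows "feasible d n A b u (\<lambda>i. x i + s i)"
proof -
  have box: "0 \<le> x i + s i \<and> x i + s i \<le> u i" if "i < n" for i
  proof -
    have "0 \<le> x i" "x i \<le> u i" "0 \<le> x i + a * s i" "x i + a * s i \<le> u i"
      using x xs that unfolding feasible_def by auto
    moreover have "s i \<le> a * s i" if "s i \<ge> 0"
      using a that by (simp add: mult_le_cancel_right1)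
    moreover have "a * s i \<le> s i" if "s i < 0"
      using a that by (simp add: mult_le_cancel_right1)
    ultimately show ?thesis by linarith
  qed
  have "matvec n A (\<lambda>i. x i + s i) r = matvec n A x r + matvec n A s r" for r
    by (simp add: matvec_def distrib_left sum.distrib)
  with x s box show ?thesis
    unfolding feasible_def in_kernel_def supp_in_def by auto
qed

lemma norm1_pos_if_dotp_nonzero: "dotp n c v \<noteq> 0 \<Longrightarrow> norm1 n v > 0"
proof (rule ccontr)
  assume dot: "dotp n c v \<noteq> 0" and "\<not> norm1 n v > 0"
  moreover have "norm1 n v \<ge> 0" unfolding norm1_def by (simp add: sum_nonneg)
  ultimately have "norm1 n v = 0" by simp
  then have "\<forall>i<n. v i = 0" unfolding norm1_def by (simp add: sum_nonneg_eq_0_iff)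
  then have "dotp n c v = 0" unfolding dotp_def by simp
  with dot show False by simp
qed

lemma neg_dotp_eq_ratio:
  "norm1 n s > 0 \<Longrightarrow> - real_of_int (dotp n c s) = descent_ratio n c s * real_of_int (norm1 n s)"
  unfolding descent_ratio_def by simp

lemma abs_comb_le:
  assumes "\<forall>l\<in>L. a l \<ge> (0::int)"
  shows "\<bar>(\<Sum>l\<in>L. a l * w l t) + y t\<bar> \<le> (\<Sum>l\<in>L. a l * \<bar>w l t\<bar>) + \<bar>y t\<bar>"
proof -
  have "\<bar>\<Sum>l\<in>L. a l * w l t\<bar> \<le> (\<Sum>l\<in>L. \<bar>a l * w l t\<bar>)" by (rule sum_abs)
  also have "\<dots> = (\<Sum>l\<in>L. a l * \<bar>w l t\<bar>)"
    using assms by (intro sum.cong) (auto simp: abs_mult)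
  finally show ?thesis by (meson abs_triangle_ineq add_right_mono order_trans)
qed

lemma abs_add_less_if_opposite: "(p::int) * q < 0 \<Longrightarrow> \<bar>p + q\<bar> < \<bar>p\<bar> + \<bar>q\<bar>"
  by (cases "p \<ge> 0"; cases "q \<ge> 0") (auto simp: mult_less_0_iff)

lemma abs_comb_less:
  assumes "finite L" "\<forall>l\<in>L. a l \<ge> (0::int)" "l0 \<in> L" "a l0 > 0" "w l0 t * y t < 0"
  shows "\<bar>(\<Sum>l\<in>L. a l * w l t) + y t\<bar> < (\<Sum>l\<in>L. a l * \<bar>w l t\<bar>) + \<bar>y t\<bar>"
proof -
  let ?rest = "\<Sum>l\<in>L-{l0}. a l * w l t"
  have split: "(\<Sum>l\<in>L. a l * w l t) = a l0 * w l0 t + ?rest"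
    "(\<Sum>l\<in>L. a l * \<bar>w l t\<bar>) = a l0 * \<bar>w l0 t\<bar> + (\<Sum>l\<in>L-{l0}. a l * \<bar>w l t\<bar>)"
    using assms(1,3) by (simp_all add: sum.remove)
  have rest: "\<bar>?rest\<bar> \<le> (\<Sum>l\<in>L-{l0}. a l * \<bar>w l t\<bar>)"
    using abs_comb_le[of "L-{l0}" a w t "\<lambda>_. 0"] assms(2) by auto
  have "(a l0 * w l0 t) * y t < 0"
    using assms(4,5) by (metis mult.assoc mult_pos_neg)
  then have "\<bar>a l0 * w l0 t + y t\<bar> < a l0 * \<bar>w l0 t\<bar> + \<bar>y t\<bar>"
    using abs_add_less_if_opposite assms(4) by (fastforce simp: abs_mult)
  with rest show ?thesis
    unfolding split using abs_triangle_ineq[of "a l0 * w l0 t + y t" ?rest]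
    by (simp add: algebra_simps)
qed

lemma sum_abs_comb_eq:
  "(\<Sum>t<n. (\<Sum>l\<in>L. a l * \<bar>w l t\<bar>) + \<bar>y t\<bar>) = (\<Sum>l\<in>L. a l * norm1 n (w l)) + norm1 n y"
  unfolding norm1_def by (simp add: sum.distrib sum_distrib_left sum.swap[of _ L])

lemma norm1_comb_le:
  assumes "\<forall>l\<in>L. a l \<ge> (0::int)"
  shows "norm1 n (\<lambda>t. (\<Sum>l\<in>L. a l * w l t) + y t) \<le> (\<Sum>l\<in>L. a l * norm1 n (w l)) + norm1 n y"
  unfolding sum_abs_comb_eq[symmetric]
  unfolding norm1_def by (intro sum_mono abs_comb_le[OF assms])

lemma norm1_comb_less:
  assumes "finite L" "\<forall>l\<in>L. a l \<ge> (0::int)" "l0 \<in> L" "a l0 > 0" "t0 < n" "w l0 t0 * y t0 < 0"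
  shows "norm1 n (\<lambda>t. (\<Sum>l\<in>L. a l * w l t) + y t) < (\<Sum>l\<in>L. a l * norm1 n (w l)) + norm1 n y"
  unfolding sum_abs_comb_eq[symmetric] unfolding norm1_def
proof (rule sum_strict_mono_ex1)
  show "\<exists>t\<in>{..<n}. \<bar>(\<Sum>l\<in>L. a l * w l t) + y t\<bar> < (\<Sum>l\<in>L. a l * \<bar>w l t\<bar>) + \<bar>y t\<bar>"
    using abs_comb_less[OF assms(1-4), of w t0 y] assms(5,6) by blast
qed (use abs_comb_le[OF assms(2)] in auto)

subsection \<open>A sequence of steepest-descent augmentations\<close>

locale sd_sequence =
  fixes d n :: nat and A :: "nat \<Rightarrow> nat \<Rightarrow> int" and b c u xk :: "nat \<Rightarrow> int"
    and \<alpha> :: "nat \<Rightarrow> int" and z :: "nat \<Rightarrow> nat \<Rightarrow> int" and j :: nat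
  assumes start_feasible: "feasible d n A b u xk"
    and augmentations: "\<forall>i\<in>{1..j}. sd_augmentation d n A b c u
            (\<lambda>t. xk t + (\<Sum>l\<in>{1..<i}. \<alpha> l * z l t)) (\<alpha> i) (z i)"
begin

text \<open>The point before the \<open>i\<close>-th augmentation, the descent ratio of the \<open>i\<close>-th
  direction, and the combined step from the \<open>i\<close>-th point to \<open>X m + z m\<close> together
  with its \<open>weighted length\<close> (the triangle-inequality bound for its l1-norm).\<close>

definition X :: "nat \<Rightarrow> nat \<Rightarrow> int" where
  "X i = (\<lambda>t. xk t + (\<Sum>l\<in>{1..<i}. \<alpha> l * z l t))"

definition R :: "nat \<Rightarrow> real" where
  "R i = descent_ratio n c (z i)"

definition combined_step :: "nat \<Rightarrow> nat \<Rightarrow> nat \<Rightarrow> int" where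
  "combined_step i m = (\<lambda>t. (\<Sum>l\<in>{i..<m}. \<alpha> l * z l t) + z m t)"

definition weighted_length :: "nat \<Rightarrow> nat \<Rightarrow> int" where
  "weighted_length i m = (\<Sum>l\<in>{i..<m}. \<alpha> l * norm1 n (z l)) + norm1 n (z m)"

lemma augmentation:
  assumes "1 \<le> i" "i \<le> j"
  shows "in_kernel d n A (z i)" "dotp n c (z i) < 0" "\<alpha> i > 0"
    "feasible d n A b u (\<lambda>t. X i t + \<alpha> i * z i t)"
    "\<And>w. \<lbrakk>in_kernel d n A w; w \<noteq> (\<lambda>_. 0); feasible d n A b u (\<lambda>t. X i t + w t)\<rbrakk>
       \<Longrightarrow> descent_ratio n c w \<le> R i"
  using augmentations assms unfolding sd_augmentation_def X_def R_def by auto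

lemma X_Suc: "1 \<le> i \<Longrightarrow> X (Suc i) = (\<lambda>t. X i t + \<alpha> i * z i t)"
  unfolding X_def by (auto simp: sum.atLeastLessThan_Suc)

lemma X_feasible: "1 \<le> i \<Longrightarrow> i \<le> j \<Longrightarrow> feasible d n A b u (X i)"
proof (induction i rule: dec_induct)
  case base
  then show ?case using start_feasible by (simp add: X_def)
next
  case (step i)
  then show ?case using augmentation(4)[of i] X_Suc[of i] by simp
qed

lemma norm1_pos: "1 \<le> i \<Longrightarrow> i \<le> j \<Longrightarrow> norm1 n (z i) > 0"
  using norm1_pos_if_dotp_nonzero augmentation(2) by (metis less_irrefl)

lemma neg_dotp_z: "1 \<le> i \<Longrightarrow> i \<le> j \<Longrightarrow> - real_of_int (dotp n c (z i)) = R i * norm1 n (z i)"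
  using neg_dotp_eq_ratio norm1_pos unfolding R_def by blast

lemma R_pos: assumes "1 \<le> i" "i \<le> j" shows "R i > 0"
proof -
  have "R i * norm1 n (z i) > 0" using neg_dotp_z[OF assms] augmentation(2)[OF assms] by linarith
  then show ?thesis using norm1_pos[OF assms] by (simp add: zero_less_mult_iff)
qed

text \<open>The combined step is an improving kernel vector leading from \<open>X i\<close> to the feasible
  point \<open>X m + z m\<close>; steepest descent at \<open>X i\<close> thus bounds its ratio by \<open>R i\<close>.\<close>

lemma combined_step_bound:
  assumes "1 \<le> i" "i < m" "m \<le> j"
  shows "- real_of_int (dotp n c (combined_step i m)) \<le> R i * norm1 n (combined_step i m)"
proof -
  let ?v = "combined_step i m"
  have kernel: "in_kernel d n A ?v"
    unfolding combined_step_def using augmentation(1) assms by (intro in_kernel_comb) auto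
  have "(\<Sum>l\<in>{i..<m}. \<alpha> l * dotp n c (z l)) \<le> 0"
    using augmentation(2,3) assms by (intro sum_nonpos) (simp add: mult_pos_neg less_imp_le)
  then have improving: "dotp n c ?v < 0"
    using augmentation(2)[of m] assms unfolding combined_step_def by (simp add: dotp_comb)
  then have nonzero: "?v \<noteq> (\<lambda>_. 0)" by (auto simp: dotp_def)
  have "(\<Sum>l\<in>{1..<i}. \<alpha> l * z l t) + (\<Sum>l\<in>{i..<m}. \<alpha> l * z l t) = (\<Sum>l\<in>{1..<m}. \<alpha> l * z l t)" for t
    using assms by (intro sum.atLeastLessThan_concat) auto
  then have "(\<lambda>t. X i t + ?v t) = (\<lambda>t. X m t + z m t)"
    unfolding X_def combined_step_def by (simp add: algebra_simps)
  moreover have "feasible d n A b u (\<lambda>t. X m t + z m t)"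
  proof (rule feasible_unit_step)
    show "feasible d n A b u (X m)" using assms by (intro X_feasible) auto
    show "feasible d n A b u (\<lambda>t. X m t + \<alpha> m * z m t)" "\<alpha> m \<ge> 1" "in_kernel d n A (z m)"
      using augmentation(1,3,4)[of m] assms by auto
  qed
  ultimately have "descent_ratio n c ?v \<le> R i"
    using augmentation(5)[of i ?v] kernel nonzero assms by simp
  moreover have "norm1 n ?v > 0" using norm1_pos_if_dotp_nonzero[of n c ?v] improving by linarith
  ultimately show ?thesis
    using neg_dotp_eq_ratio[of n ?v c] by (simp add: mult_right_mono)
qed

lemma neg_dotp_combined_step:
  assumes "1 \<le> i" "i \<le> m" "m \<le> j"
  shows "- real_of_int (dotp n c (combined_step i m))
           = (\<Sum>l\<in>{i..<m}. \<alpha> l * (R l * norm1 n (z l))) + R m * norm1 n (z m)"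
proof -
  have "- real_of_int (dotp n c (combined_step i m))
          = (\<Sum>l\<in>{i..<m}. \<alpha> l * (- real_of_int (dotp n c (z l)))) - real_of_int (dotp n c (z m))"
    unfolding combined_step_def by (simp add: dotp_comb sum_negf)
  also have "\<dots> = (\<Sum>l\<in>{i..<m}. \<alpha> l * (R l * norm1 n (z l))) + R m * norm1 n (z m)"
  proof -
    have "(\<Sum>l\<in>{i..<m}. \<alpha> l * (- real_of_int (dotp n c (z l))))
            = (\<Sum>l\<in>{i..<m}. \<alpha> l * (R l * norm1 n (z l)))"
      using assms neg_dotp_z by (intro sum.cong) auto
    then show ?thesis using assms neg_dotp_z[of m] by simp
  qed
  finally show ?thesis .
qed

lemma norm1_combined_step_le:
  assumes "1 \<le> i" "m \<le> j"
  shows "norm1 n (combined_step i m) \<le> weighted_length i m"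
  unfolding combined_step_def weighted_length_def
  using augmentation(3) assms by (intro norm1_comb_le) (auto simp: less_imp_le)

lemma norm1_combined_step_less:
  assumes "1 \<le> i" "i < m" "m \<le> j" "t0 < n" "z i t0 * z m t0 < 0"
  shows "norm1 n (combined_step i m) < weighted_length i m"
  unfolding combined_step_def weighted_length_def
  using augmentation(3) assms by (intro norm1_comb_less[of _ _ i t0]) (auto simp: less_imp_le)

lemma weighted_length_pos:
  assumes "1 \<le> i" "m \<le> j" "1 \<le> m"
  shows "weighted_length i m > 0"
proof -
  have "(\<Sum>l\<in>{i..<m}. \<alpha> l * norm1 n (z l)) \<ge> 0"
    using assms augmentation(3) norm1_pos by (intro sum_nonneg) (simp add: less_imp_le)
  then show ?thesis using norm1_pos[of m] assms unfolding weighted_length_def by simp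
qed

lemma R_Suc_le:
  assumes "1 \<le> i" "i < j"
  shows "R (Suc i) \<le> R i"
proof -
  let ?N = "\<lambda>l. real_of_int (norm1 n (z l))"
  have "\<alpha> i * (R i * ?N i) + R (Suc i) * ?N (Suc i)
          \<le> R i * norm1 n (combined_step i (Suc i))"
    using combined_step_bound[of i "Suc i"] neg_dotp_combined_step[of i "Suc i"] assms by simp
  also have "\<dots> \<le> R i * (\<alpha> i * ?N i + ?N (Suc i))"
    using norm1_combined_step_le[of i "Suc i"] R_pos[of i] assms
    by (intro mult_left_mono) (simp_all add: weighted_length_def flip: of_int_mult of_int_add)
  finally have "R (Suc i) * ?N (Suc i) \<le> R i * ?N (Suc i)" by (simp add: algebra_simps)
  then show ?thesis using norm1_pos[of "Suc i"] assms by simp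
qed

lemma R_antitone:
  assumes "1 \<le> i" "i \<le> m" "m \<le> j"
  shows "R m \<le> R i"
  using assms(2,3)
proof (induction m rule: dec_induct)
  case (step m)
  then show ?case using R_Suc_le[of m] assms(1) by simp
qed simp

text \<open>By antitonicity every direction in a combined step has ratio at least that of its
  last direction, which bounds the improvement of the combined step from below.\<close>

lemma neg_dotp_combined_step_lower:
  assumes "1 \<le> i" "i \<le> m" "m \<le> j"
  shows "R m * weighted_length i m \<le> - real_of_int (dotp n c (combined_step i m))"
proof -
  have "\<alpha> l * (R m * norm1 n (z l)) \<le> \<alpha> l * (R l * norm1 n (z l))" if "l \<in> {i..<m}" for l
    using that assms R_antitone[of l m] augmentation(3)[of l] norm1_pos[of l]
    by (intro mult_left_mono mult_right_mono) auto
  then have "(\<Sum>l\<in>{i..<m}. \<alpha> l * (R m * norm1 n (z l)))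
               \<le> (\<Sum>l\<in>{i..<m}. \<alpha> l * (R l * norm1 n (z l)))"
    by (rule sum_mono)
  then show ?thesis
    unfolding neg_dotp_combined_step[OF assms] weighted_length_def
    by (simp add: sum_distrib_left algebra_simps)
qed

theorem R_strict_decrease:
  assumes "1 \<le> i" "i < m" "m \<le> j" "\<not> same_sign_pattern n (z i) (z m)"
  shows "R m < R i"
proof -
  obtain t0 where t0: "t0 < n" "z i t0 * z m t0 < 0"
    using assms(4) unfolding same_sign_pattern_def by (auto simp: not_le)
  have "R m * weighted_length i m \<le> - real_of_int (dotp n c (combined_step i m))"
    using neg_dotp_combined_step_lower assms by simp
  also have "\<dots> \<le> R i * norm1 n (combined_step i m)"
    using combined_step_bound assms by blast
  also have "\<dots> < R i * weighted_length i m"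
    using norm1_combined_step_less[OF assms(1-3) t0] R_pos[of i] assms by simp
  finally show ?thesis
    using weighted_length_pos[of i m] assms by (simp add: mult_less_cancel_right)
qed

end

theorem lemma5:
  fixes d n j :: nat
    and A :: "nat \<Rightarrow> nat \<Rightarrow> int"
    and b c u xk :: "nat \<Rightarrow> int"
    and \<alpha> :: "nat \<Rightarrow> int"
    and z :: "nat \<Rightarrow> nat \<Rightarrow> int"
  assumes "\<forall>i<n. 0 \<le> u i"
    and "feasible d n A b u xk"
    and "j \<ge> 2"
    and "\<forall>i\<in>{1..j}. sd_augmentation d n A b c u
            (\<lambda>t. xk t + (\<Sum>l\<in>{1..<i}. \<alpha> l * z l t)) (\<alpha> i) (z i)"
    and "\<not> same_sign_pattern n (z 1) (z j)"
  shows "descent_ratio n c (z 1) > descent_ratio n c (z j)"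
proof -
  interpret sd_sequence d n A b c u xk \<alpha> z j
    using assms(2,4) by unfold_locales
  show ?thesis
    using R_strict_decrease[of 1 j] assms(3,5) unfolding R_def by simp
qed

end
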